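(* Let $\mathcal{S}$ be a normal SPN over Boolean variables $X_1,\ldots,X_N$ and let $\mathcal{B}$, $\mathcal{A}_H$, $\mathcal{A}_X$ be the Bayesian network and ADDs constructed from $\mathcal{S}$ as described in the context. Then these ADDs encode local CPDs at each node of $\mathcal{B}$: for each hidden variable $H_v$, $\mathcal{A}_{H_v}$ is a probability distribution over the values of $H_v$; and for each observable variable $X$, every hidden variable labelling a node of $\mathcal{A}_X$ is a parent of $X$ in $\mathcal{B}$, and for every joint assignment $\mathbf{h}$ of the parents of $X$, following $\mathcal{A}_X$ from its root according to $\mathbf{h}$ leads to a terminal node which is a probability distribution over $X$; thus $\mathcal{A}_X$ represents a conditional distribution $\Pr(X\mid \mathrm{Pa}(X))$.
   Context: SPNs. Let $X_1,\ldots,X_N$ be Boolean variables. An SPN is a finite rooted DAG whose internal nodes are sum and product nodes, each edge $(v,u)$ out of a sum node carrying a weight $w_{v,u}\ge 0$, and whose terminal nodes are indicators $\mathbb{I}_{x_n},\mathbb{I}_{\bar x_n}$ or univariate distribution nodes over some $X_n$ with parameter $p\in[0,1]$ (value $p\mathbb{I}_{x_n}+(1-p)\mathbb{I}_{\bar x_n}$); products multiply, sum nodes take $\sum_u w_{v,u}\mathrm{val}(u)$, and $f_{\mathcal{S}}(\mathbf{x})$ is the root value with $\Pr_{\mathcal{S}}(\mathbf{x})=f_{\mathcal{S}}(\mathbf{x})/\sum_{\mathbf{x}'}f_{\mathcal{S}}(\mathbf{x}')$. The scope of a terminal node over $X_n$ is $\{X_n\}$; an internal node's scope is the union of its children's scopes.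 The SPN is over $X_1,\ldots,X_N$ if the root's scope is $\{X_1,\ldots,X_N\}$. It is normal if (1) it is complete (children of each sum node have equal scopes) and decomposable (children of each product node have pairwise disjoint scopes); (2) the weights leaving each sum node are nonnegative and sum to 1; (3) every terminal node is a univariate distribution node and every sum node has scope size at least 2. Construction. From a normal SPN $\mathcal{S}$ over $X_1,\ldots,X_N$ build a Bayesian network $\mathcal{B}$: its variables are the observable variables $X_1,\ldots,X_N$ and, for each sum node $v$ with children $u_1,\ldots,u_l$, a hidden variable $H_v$ with values $\{1,\ldots,l\}$; its edges are exactly $H_v\to X$ for each sum node $v$ and each $X\in\mathrm{scope}(v)$. The CPD of $H_v$ is the ADD (decision stump) $\mathcal{A}_{H_v}$ with root labelled $H_v$ whose $i$-th edge leads to a terminal with value $w_{v,u_i}$, i.e. $\Pr(H_v=i)=w_{v,u_i}$. The CPD of $X$ is the ADD $\mathcal{A}_X$ obtained by taking the subgraph of $\mathcal{S}$ induced by the nodes whose scope contains $X$ (in which each product node has exactly one child, by decomposability), contracting every product node (connecting each of its parents to its unique child and deleting it; if it is the root, its child becomes the root), turning each sum node $v$ into an ADD node labelled $H_v$ whose $i$-th out-edge goes to the image of its $i$-th child $u_i$, and keeping each terminal node (a univariate distribution over $X$) as an ADD terminal carrying that distribution. An ADD is a rooted DAG with internal nodes labelled by variables, a node labelled $Y$ having one out-edge per value of $Y$, evaluated by following edges according to an assignment. *)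

theory Defs
  imports Complex_Main
begin

text \<open>Observable variables are indexed by natural numbers (X_n is index n, 1 \<le> n \<le> N).
  Node kinds: sum, product, indicator (Ind n True is the indicator of x_n,
  Ind n False that of the negated literal), and univariate distribution
  node over X_n with parameter p.\<close>

datatype node_kind = SumN | ProdN | IndN nat bool | DistN nat real

record 'n spn =
  s_nodes :: "'n set"
  s_root :: 'n
  s_kind :: "'n \<Rightarrow> node_kind"
  s_ch :: "'n \<Rightarrow> 'n list"
  s_w :: "'n \<Rightarrow> 'n \<Rightarrow> real"       \<comment> \<open>weight of edge (v,u) out of a sum node v\<close>

definition is_terminal :: "node_kind \<Rightarrow> bool" where
  "is_terminal k \<longleftrightarrow> (\<exists>n b. k = IndN n b) \<or> (\<exists>n p. k = DistN n p)"

definition s_edges :: "('n,'m) spn_scheme \<Rightarrow> ('n \<times> 'n) set" where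
  "s_edges S = {(v,u). v \<in> s_nodes S \<and> u \<in> set (s_ch S v)}"

definition spn_wf :: "('n,'m) spn_scheme \<Rightarrow> bool" where
  "spn_wf S \<longleftrightarrow>
     finite (s_nodes S) \<and> s_root S \<in> s_nodes S \<and>
     (\<forall>v\<in>s_nodes S. set (s_ch S v) \<subseteq> s_nodes S \<and> distinct (s_ch S v)) \<and>
     (\<forall>v\<in>s_nodes S. is_terminal (s_kind S v) \<longleftrightarrow> s_ch S v = []) \<and>
     (\<forall>v\<in>s_nodes S. \<forall>n p. s_kind S v = DistN n p \<longrightarrow> 0 \<le> p \<and> p \<le> 1) \<and>
     acyclic (s_edges S) \<and>
     (\<forall>v\<in>s_nodes S. (s_root S, v) \<in> (s_edges S)\<^sup>*)"

inductive in_scope :: "('n,'m) spn_scheme \<Rightarrow> 'n \<Rightarrow> nat \<Rightarrow> bool" for S where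
  ind: "s_kind S u = IndN n b \<Longrightarrow> in_scope S u n"
| dist: "s_kind S u = DistN n p \<Longrightarrow> in_scope S u n"
| child: "s_kind S v \<in> {SumN, ProdN} \<Longrightarrow> u \<in> set (s_ch S v) \<Longrightarrow> in_scope S u n \<Longrightarrow> in_scope S v n"

definition scope :: "('n,'m) spn_scheme \<Rightarrow> 'n \<Rightarrow> nat set" where
  "scope S v = {n. in_scope S v n}"

definition spn_over :: "('n,'m) spn_scheme \<Rightarrow> nat \<Rightarrow> bool" where
  "spn_over S N \<longleftrightarrow> scope S (s_root S) = {1..N}"

definition complete :: "('n,'m) spn_scheme \<Rightarrow> bool" where
  "complete S \<longleftrightarrow> (\<forall>v\<in>s_nodes S. s_kind S v = SumN \<longrightarrow>
      (\<forall>u\<in>set (s_ch S v). \<forall>u'\<in>set (s_ch S v). scope S u = scope S u'))"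

definition decomposable :: "('n,'m) spn_scheme \<Rightarrow> bool" where
  "decomposable S \<longleftrightarrow> (\<forall>v\<in>s_nodes S. s_kind S v = ProdN \<longrightarrow>
      (\<forall>u\<in>set (s_ch S v). \<forall>u'\<in>set (s_ch S v). u \<noteq> u' \<longrightarrow> scope S u \<inter> scope S u' = {}))"

definition normal_spn :: "('n,'m) spn_scheme \<Rightarrow> bool" where
  "normal_spn S \<longleftrightarrow> spn_wf S \<and> complete S \<and> decomposable S \<and>
     (\<forall>v\<in>s_nodes S. s_kind S v = SumN \<longrightarrow>
        (\<forall>u\<in>set (s_ch S v). 0 \<le> s_w S v u) \<and> (\<Sum>u\<leftarrow>s_ch S v. s_w S v u) = 1) \<and>
     (\<forall>v\<in>s_nodes S. is_terminal (s_kind S v) \<longrightarrow> (\<exists>n p. s_kind S v = DistN n p)) \<and>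
     (\<forall>v\<in>s_nodes S. s_kind S v = SumN \<longrightarrow> card (scope S v) \<ge> 2)"

datatype ('v,'t) add_label = AVar 'v | ATerm 't

text \<open>An ADD: node set, root, labels (variable or terminal value), and for a node
  labelled Y the i-th out-edge (i = 1..a_vals Y) given by a_succ.\<close>
record ('a,'v,'t) add =
  a_nodes :: "'a set"
  a_root :: 'a
  a_lab :: "'a \<Rightarrow> ('v,'t) add_label"
  a_succ :: "'a \<Rightarrow> nat \<Rightarrow> 'a"
  a_vals :: "'v \<Rightarrow> nat"

inductive add_follows :: "('a,'v,'t) add \<Rightarrow> ('v \<Rightarrow> nat) \<Rightarrow> 'a \<Rightarrow> 'a \<Rightarrow> bool" for A h where
  at_term: "a_lab A a = ATerm t \<Longrightarrow> add_follows A h a a"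
| step: "a_lab A a = AVar y \<Longrightarrow> 1 \<le> h y \<Longrightarrow> h y \<le> a_vals A y \<Longrightarrow>
         add_follows A h (a_succ A a (h y)) b \<Longrightarrow> add_follows A h a b"

definition add_value :: "('a,'v,'t) add \<Rightarrow> ('v \<Rightarrow> nat) \<Rightarrow> 't" where
  "add_value A h = (THE t. \<exists>a. add_follows A h (a_root A) a \<and> a_lab A a = ATerm t)"

datatype 'n bn_var = Obs nat | Hid 'n

definition bn_vars :: "('n,'m) spn_scheme \<Rightarrow> nat \<Rightarrow> 'n bn_var set" where
  "bn_vars S N = Obs ` {1..N} \<union> Hid ` {v\<in>s_nodes S. s_kind S v = SumN}"

definition bn_edges :: "('n,'m) spn_scheme \<Rightarrow> ('n bn_var \<times> 'n bn_var) set" where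
  "bn_edges S = {(Hid v, Obs n) | v n. v \<in> s_nodes S \<and> s_kind S v = SumN \<and> n \<in> scope S v}"

definition bn_parents :: "('n,'m) spn_scheme \<Rightarrow> 'n bn_var \<Rightarrow> 'n bn_var set" where
  "bn_parents S y = {z. (z, y) \<in> bn_edges S}"

text \<open>H_v takes values 1..l where l is the number of children; X_n is Boolean.\<close>
definition bn_card :: "('n,'m) spn_scheme \<Rightarrow> 'n bn_var \<Rightarrow> nat" where
  "bn_card S y = (case y of Hid v \<Rightarrow> length (s_ch S v) | Obs n \<Rightarrow> 2)"

definition add_H :: "('n,'m) spn_scheme \<Rightarrow> 'n \<Rightarrow> (nat option, 'n bn_var, real) add" where
  "add_H S v = \<lparr> a_nodes = {None} \<union> Some ` {1..length (s_ch S v)},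
      a_root = None,
      a_lab = (\<lambda>a. case a of None \<Rightarrow> AVar (Hid v)
                            | Some i \<Rightarrow> ATerm (s_w S v (s_ch S v ! (i - 1)))),
      a_succ = (\<lambda>a i. Some i),
      a_vals = bn_card S \<rparr>"

text \<open>Contraction of product nodes in the subgraph induced by nodes whose scope
  contains X: contr u u' holds iff u' is the image of u.\<close>
inductive contr :: "('n,'m) spn_scheme \<Rightarrow> nat \<Rightarrow> 'n \<Rightarrow> 'n \<Rightarrow> bool" for S X where
  keep: "s_kind S u \<noteq> ProdN \<Longrightarrow> contr S X u u"
| prod: "s_kind S u = ProdN \<Longrightarrow> c \<in> set (s_ch S u) \<Longrightarrow> X \<in> scope S c \<Longrightarrow>
         contr S X c u' \<Longrightarrow> contr S X u u'"

definition img :: "('n,'m) spn_scheme \<Rightarrow> nat \<Rightarrow> 'n \<Rightarrow> 'n" where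
  "img S X u = (THE u'. contr S X u u')"

text \<open>Terminal payload: a univariate distribution over X_n with parameter p, as the pair (n,p)
  (an indicator is the degenerate distribution with p = 1 or p = 0).\<close>
definition terminal_payload :: "node_kind \<Rightarrow> nat \<times> real" where
  "terminal_payload k = (case k of DistN n p \<Rightarrow> (n, p)
                          | IndN n b \<Rightarrow> (n, if b then 1 else 0)
                          | _ \<Rightarrow> undefined)"

definition add_X :: "('n,'m) spn_scheme \<Rightarrow> nat \<Rightarrow> ('n, 'n bn_var, nat \<times> real) add" where
  "add_X S X = \<lparr> a_nodes = {u\<in>s_nodes S. X \<in> scope S u \<and> s_kind S u \<noteq> ProdN},
      a_root = img S X (s_root S),
      a_lab = (\<lambda>u. if s_kind S u = SumN then AVar (Hid u) else ATerm (terminal_payload (s_kind S u))),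
      a_succ = (\<lambda>u i. img S X (s_ch S u ! (i - 1))),
      a_vals = bn_card S \<rparr>"

definition uni_dist :: "real \<Rightarrow> bool \<Rightarrow> real" where
  "uni_dist p x = (if x then p else 1 - p)"

end

theory Submission
  imports Defs
begin

text \<open>The CPD of a hidden variable H_v is a stump whose leaves carry the weights of v, which are
  nonnegative and sum to 1 by normality. For an observable X, the ADD A_X consists of the sum and
  terminal nodes whose scope contains X; a sum node v is labelled H_v, and H_v is a parent of X
  precisely because X lies in the scope of v. By completeness every child of such a sum node
  again has X in its scope, and by decomposability a product node has exactly one child with X in
  its scope, so contraction is well defined. Hence, whatever values the parents take, the walk
  through A_X never leaves the nodes with X in their scope and, the SPN being acyclic, ends in a
  terminal node, which is a distribution node over X.\<close>

lemma finite_s_edges: "spn_wf S \<Longrightarrow> finite (s_edges S)"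
  unfolding spn_wf_def s_edges_def
  by (rule finite_subset[of _ "s_nodes S \<times> s_nodes S"]) auto

lemma wf_converse_s_edges: "spn_wf S \<Longrightarrow> wf ((s_edges S)\<inverse>)"
  using finite_s_edges finite_acyclic_wf_converse unfolding spn_wf_def by blast

lemma wf_converse_trancl_s_edges: "spn_wf S \<Longrightarrow> wf (((s_edges S)\<^sup>+)\<inverse>)"
  using wf_trancl[OF wf_converse_s_edges] by (simp add: trancl_converse)

lemma s_edgesI: "u \<in> s_nodes S \<Longrightarrow> c \<in> set (s_ch S u) \<Longrightarrow> (u, c) \<in> s_edges S"
  unfolding s_edges_def by auto

lemma child_in_s_nodes: "spn_wf S \<Longrightarrow> u \<in> s_nodes S \<Longrightarrow> c \<in> set (s_ch S u) \<Longrightarrow> c \<in> s_nodes S"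
  unfolding spn_wf_def by blast

lemma in_scope_DistN: "in_scope S u n \<Longrightarrow> s_kind S u = DistN m p \<Longrightarrow> n = m"
  by (cases rule: in_scope.cases) auto

lemma in_scope_inner:
  "in_scope S u n \<Longrightarrow> s_kind S u \<in> {SumN, ProdN} \<Longrightarrow> \<exists>c\<in>set (s_ch S u). in_scope S c n"
  by (cases rule: in_scope.cases) auto

lemma scope_child_of_sum:
  assumes "complete S" "u \<in> s_nodes S" "s_kind S u = SumN" "X \<in> scope S u" "c \<in> set (s_ch S u)"
  shows "X \<in> scope S c"
proof -
  obtain c' where "c' \<in> set (s_ch S u)" "in_scope S c' X"
    using in_scope_inner[of S u X] assms(3,4) unfolding scope_def by force
  moreover have "scope S c = scope S c'"
    using assms(1-3,5) \<open>c' \<in> set (s_ch S u)\<close> unfolding complete_def by blast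
  ultimately show ?thesis unfolding scope_def by blast
qed

lemma contr_target:
  assumes "spn_wf S" "contr S X u u'" "u \<in> s_nodes S" "X \<in> scope S u"
  shows "u' \<in> s_nodes S \<and> X \<in> scope S u' \<and> s_kind S u' \<noteq> ProdN \<and> (u, u') \<in> (s_edges S)\<^sup>*"
  using assms(2-4)
proof (induction rule: contr.induct)
  case (keep u)
  then show ?case by blast
next
  case (prod u c u')
  have "c \<in> s_nodes S" using child_in_s_nodes[OF assms(1) prod.prems(1) prod.hyps(2)] .
  with prod have "u' \<in> s_nodes S \<and> X \<in> scope S u' \<and> s_kind S u' \<noteq> ProdN \<and> (c, u') \<in> (s_edges S)\<^sup>*"
    by blast
  moreover have "(u, c) \<in> s_edges S" using s_edgesI[OF prod.prems(1) prod.hyps(2)] .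
  ultimately show ?case by (meson converse_rtrancl_into_rtrancl)
qed

lemma contr_exists:
  assumes "spn_wf S"
  shows "u \<in> s_nodes S \<Longrightarrow> X \<in> scope S u \<Longrightarrow> \<exists>u'. contr S X u u'"
  using wf_converse_s_edges[OF assms]
proof (induction u rule: wf_induct_rule)
  case (less u)
  show ?case
  proof (cases "s_kind S u = ProdN")
    case False
    then show ?thesis using contr.keep[OF False] by blast
  next
    case True
    then obtain c where c: "c \<in> set (s_ch S u)" "X \<in> scope S c"
      using in_scope_inner[of S u X] less.prems(2) unfolding scope_def by force
    have "(u, c) \<in> s_edges S" "c \<in> s_nodes S"
      using s_edgesI[OF less.prems(1) c(1)] child_in_s_nodes[OF assms less.prems(1) c(1)] by auto
    then obtain u' where "contr S X c u'" using less.IH c(2) by blast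
    then show ?thesis using contr.prod[OF True c] by blast
  qed
qed

text \<open>Decomposability is what makes the image unique: two children of a product node that both
  have X in their scope must coincide.\<close>
lemma contr_unique:
  assumes "spn_wf S" "decomposable S"
  shows "contr S X u u1 \<Longrightarrow> u \<in> s_nodes S \<Longrightarrow> contr S X u u2 \<Longrightarrow> u1 = u2"
proof (induction arbitrary: u2 rule: contr.induct)
  case (keep u)
  from keep.prems(2) show ?case by (cases rule: contr.cases) (use keep.hyps in auto)
next
  case (prod u c u')
  from prod.prems(2) show ?case
  proof (cases rule: contr.cases)
    case keep
    then show ?thesis using prod.hyps(1) by auto
  next
    case (prod c')
    have "c = c'"
    proof (rule ccontr)
      assume "c \<noteq> c'"
      then have "scope S c \<inter> scope S c' = {}"
        using assms(2) prod.prems(1) \<open>s_kind S u = ProdN\<close> \<open>c \<in> set (s_ch S u)\<close> prod(2)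
        unfolding decomposable_def by blast
      then show False using \<open>X \<in> scope S c\<close> prod(3) by blast
    qed
    then show ?thesis
      using prod.IH prod(4) child_in_s_nodes[OF assms(1) prod.prems(1) \<open>c \<in> set (s_ch S u)\<close>]
      by blast
  qed
qed

lemma contr_img:
  assumes "spn_wf S" "decomposable S" "u \<in> s_nodes S" "X \<in> scope S u"
  shows "contr S X u (img S X u)"
proof -
  have "\<exists>!u'. contr S X u u'"
    using contr_exists[OF assms(1,3,4)] contr_unique[OF assms(1,2) _ assms(3)] by blast
  then show ?thesis unfolding img_def by (rule theI')
qed

lemma img_target:
  assumes "spn_wf S" "decomposable S" "u \<in> s_nodes S" "X \<in> scope S u"
  shows "img S X u \<in> s_nodes S \<and> X \<in> scope S (img S X u) \<and> s_kind S (img S X u) \<noteq> ProdN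
    \<and> (u, img S X u) \<in> (s_edges S)\<^sup>*"
  using contr_target[OF assms(1) contr_img[OF assms] assms(3,4)] .

lemma add_follows_add_H:
  assumes "add_follows (add_H S v) (\<lambda>_. i) None b"
  shows "b = Some i"
  using assms
proof (cases rule: add_follows.cases)
  case (step y)
  from step(4) show ?thesis
    by (cases rule: add_follows.cases) (simp_all add: add_H_def)
qed (simp add: add_H_def)

lemma add_H_leaf:
  assumes "i \<in> {1..length (s_ch S v)}"
  shows "add_follows (add_H S v) (\<lambda>_. i) (a_root (add_H S v)) (Some i)"
    and "add_value (add_H S v) (\<lambda>_. i) = s_w S v (s_ch S v ! (i - 1))"
proof -
  have root: "a_root (add_H S v) = None" by (simp add: add_H_def)
  have lab: "a_lab (add_H S v) (Some i) = ATerm (s_w S v (s_ch S v ! (i - 1)))"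
    by (simp add: add_H_def)
  show follows: "add_follows (add_H S v) (\<lambda>_. i) (a_root (add_H S v)) (Some i)"
  proof (rule add_follows.step[where y = "Hid v"])
    show "a_lab (add_H S v) (a_root (add_H S v)) = AVar (Hid v)" by (simp add: add_H_def)
    show "1 \<le> i" "i \<le> a_vals (add_H S v) (Hid v)"
      using assms by (auto simp: add_H_def bn_card_def)
    show "add_follows (add_H S v) (\<lambda>_. i) (a_succ (add_H S v) (a_root (add_H S v)) i) (Some i)"
      using add_follows.at_term[OF lab] by (simp add: add_H_def)
  qed
  show "add_value (add_H S v) (\<lambda>_. i) = s_w S v (s_ch S v ! (i - 1))"
    unfolding add_value_def
  proof (rule the_equality)
    fix t
    assume "\<exists>a. add_follows (add_H S v) (\<lambda>_. i) (a_root (add_H S v)) a \<and> a_lab (add_H S v) a = ATerm t"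
    then obtain a where "add_follows (add_H S v) (\<lambda>_. i) None a" "a_lab (add_H S v) a = ATerm t"
      unfolding root by blast
    then show "t = s_w S v (s_ch S v ! (i - 1))" using add_follows_add_H lab by force
  qed (use follows lab in blast)
qed

lemma sum_nth_from_1_eq_sum_list:
  "(\<Sum>i=1..length xs. f (xs ! (i - 1))) = (\<Sum>x\<leftarrow>xs. f x :: 'a :: comm_monoid_add)"
proof -
  have "(\<Sum>i=1..length xs. f (xs ! (i - 1))) = (\<Sum>i=0..<length xs. f (xs ! i))"
    by (rule sum.reindex_bij_witness[where i="\<lambda>i. i + 1" and j="\<lambda>i. i - 1"]) auto
  also have "\<dots> = (\<Sum>x\<leftarrow>xs. f x)" by (simp add: sum_list_sum_nth)
  finally show ?thesis .
qed

lemma add_H_distribution: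
  assumes "normal_spn S" "v \<in> s_nodes S" "s_kind S v = SumN"
  shows "\<forall>i\<in>{1..length (s_ch S v)}. \<exists>a t. add_follows (add_H S v) (\<lambda>_. i) (a_root (add_H S v)) a
              \<and> a \<in> a_nodes (add_H S v) \<and> a_lab (add_H S v) a = ATerm t \<and> 0 \<le> t"
    and "(\<Sum>i=1..length (s_ch S v). add_value (add_H S v) (\<lambda>_. i)) = 1"
proof -
  have w: "\<forall>u\<in>set (s_ch S v). 0 \<le> s_w S v u" "(\<Sum>u\<leftarrow>s_ch S v. s_w S v u) = 1"
    using assms unfolding normal_spn_def by blast+
  show "\<forall>i\<in>{1..length (s_ch S v)}. \<exists>a t. add_follows (add_H S v) (\<lambda>_. i) (a_root (add_H S v)) a
              \<and> a \<in> a_nodes (add_H S v) \<and> a_lab (add_H S v) a = ATerm t \<and> 0 \<le> t"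
  proof
    fix i assume i: "i \<in> {1..length (s_ch S v)}"
    then have "s_ch S v ! (i - 1) \<in> set (s_ch S v)" by auto
    moreover have "Some i \<in> a_nodes (add_H S v)"
      and "a_lab (add_H S v) (Some i) = ATerm (s_w S v (s_ch S v ! (i - 1)))"
      using i by (auto simp: add_H_def)
    ultimately show "\<exists>a t. add_follows (add_H S v) (\<lambda>_. i) (a_root (add_H S v)) a
              \<and> a \<in> a_nodes (add_H S v) \<and> a_lab (add_H S v) a = ATerm t \<and> 0 \<le> t"
      using add_H_leaf(1)[OF i] w(1) by blast
  qed
  have "(\<Sum>i=1..length (s_ch S v). add_value (add_H S v) (\<lambda>_. i))
      = (\<Sum>i=1..length (s_ch S v). s_w S v (s_ch S v ! (i - 1)))"
    using add_H_leaf(2) by (rule sum.cong[OF refl])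
  also have "\<dots> = 1" using sum_nth_from_1_eq_sum_list[of "s_w S v" "s_ch S v"] w(2) by simp
  finally show "(\<Sum>i=1..length (s_ch S v). add_value (add_H S v) (\<lambda>_. i)) = 1" .
qed

lemma add_X_var_label_parent:
  "a \<in> a_nodes (add_X S X) \<Longrightarrow> a_lab (add_X S X) a = AVar y \<Longrightarrow> y \<in> bn_parents S (Obs X)"
  by (auto simp: add_X_def bn_parents_def bn_edges_def split: if_splits)

lemma add_X_root:
  assumes "spn_wf S" "decomposable S" "spn_over S N" "X \<in> {1..N}"
  shows "a_root (add_X S X) \<in> a_nodes (add_X S X)"
proof -
  have "s_root S \<in> s_nodes S" "X \<in> scope S (s_root S)"
    using assms unfolding spn_wf_def spn_over_def by auto
  then show ?thesis using img_target[OF assms(1,2)] by (simp add: add_X_def)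
qed

lemma add_X_terminal:
  assumes "normal_spn S" "a \<in> a_nodes (add_X S X)" "s_kind S a \<noteq> SumN"
  shows "\<exists>p. a_lab (add_X S X) a = ATerm (X, p) \<and> 0 \<le> p \<and> p \<le> 1"
proof -
  have a: "a \<in> s_nodes S" "X \<in> scope S a" "s_kind S a \<noteq> ProdN"
    using assms(2) by (auto simp: add_X_def)
  then have "is_terminal (s_kind S a)"
    using assms(3) by (cases "s_kind S a") (auto simp: is_terminal_def)
  then obtain n p where np: "s_kind S a = DistN n p"
    using assms(1) a(1) unfolding normal_spn_def by blast
  have "n = X" using in_scope_DistN[of S a X n p] a(2) np unfolding scope_def by auto
  moreover have "0 \<le> p \<and> p \<le> 1" using assms(1) a(1) np unfolding normal_spn_def spn_wf_def by blast
  ultimately show ?thesis using np by (simp add: add_X_def terminal_payload_def)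
qed

lemma add_X_sum_step:
  assumes "normal_spn S" "a \<in> a_nodes (add_X S X)" "s_kind S a = SumN"
    and h: "\<forall>y\<in>bn_parents S (Obs X). 1 \<le> h y \<and> h y \<le> bn_card S y"
  obtains b where "a_lab (add_X S X) a = AVar (Hid a)"
    "1 \<le> h (Hid a)" "h (Hid a) \<le> a_vals (add_X S X) (Hid a)"
    "a_succ (add_X S X) a (h (Hid a)) = b" "b \<in> a_nodes (add_X S X)" "(a, b) \<in> (s_edges S)\<^sup>+"
proof -
  have W: "spn_wf S" "complete S" "decomposable S" using assms(1) unfolding normal_spn_def by auto
  have a: "a \<in> s_nodes S" "X \<in> scope S a" using assms(2) by (auto simp: add_X_def)
  have "Hid a \<in> bn_parents S (Obs X)"
    using a assms(3) unfolding bn_parents_def bn_edges_def by blast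
  then have k: "1 \<le> h (Hid a)" "h (Hid a) \<le> length (s_ch S a)"
    using h unfolding bn_card_def by auto
  define c where "c = s_ch S a ! (h (Hid a) - 1)"
  have c: "c \<in> set (s_ch S a)" unfolding c_def using k by auto
  have img: "img S X c \<in> s_nodes S \<and> X \<in> scope S (img S X c) \<and> s_kind S (img S X c) \<noteq> ProdN
      \<and> (c, img S X c) \<in> (s_edges S)\<^sup>*"
    using img_target[OF W(1,3) child_in_s_nodes[OF W(1) a(1) c]
        scope_child_of_sum[OF W(2) a(1) assms(3) a(2) c]] .
  then have "img S X c \<in> a_nodes (add_X S X)" by (simp add: add_X_def)
  moreover have "(a, img S X c) \<in> (s_edges S)\<^sup>+"
    using rtrancl_into_trancl2[OF s_edgesI[OF a(1) c]] img by blast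
  moreover have "a_succ (add_X S X) a (h (Hid a)) = img S X c" by (simp add: add_X_def c_def)
  moreover have "a_lab (add_X S X) a = AVar (Hid a)" "h (Hid a) \<le> a_vals (add_X S X) (Hid a)"
    using k assms(3) by (auto simp: add_X_def bn_card_def)
  ultimately show ?thesis using that k(1) by blast
qed

text \<open>The walk terminates because each of its steps goes strictly down the acyclic SPN.\<close>
lemma add_X_reaches_terminal:
  assumes "normal_spn S" "a \<in> a_nodes (add_X S X)"
    and h: "\<forall>y\<in>bn_parents S (Obs X). 1 \<le> h y \<and> h y \<le> bn_card S y"
  shows "\<exists>b p. add_follows (add_X S X) h a b \<and> b \<in> a_nodes (add_X S X)
    \<and> a_lab (add_X S X) b = ATerm (X, p) \<and> 0 \<le> p \<and> p \<le> 1"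
proof -
  have "wf (((s_edges S)\<^sup>+)\<inverse>)"
    using assms(1) wf_converse_trancl_s_edges unfolding normal_spn_def by blast
  then show ?thesis using assms(2)
  proof (induction a rule: wf_induct_rule)
    case (less a)
    show ?case
    proof (cases "s_kind S a = SumN")
      case True
      obtain b where b: "a_lab (add_X S X) a = AVar (Hid a)"
        "1 \<le> h (Hid a)" "h (Hid a) \<le> a_vals (add_X S X) (Hid a)"
        "a_succ (add_X S X) a (h (Hid a)) = b" "b \<in> a_nodes (add_X S X)" "(a, b) \<in> (s_edges S)\<^sup>+"
        using add_X_sum_step[OF assms(1) less.prems True h] .
      obtain b' p where b': "add_follows (add_X S X) h b b'" "b' \<in> a_nodes (add_X S X)"
        "a_lab (add_X S X) b' = ATerm (X, p)" "0 \<le> p" "p \<le> 1"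
        using less.IH[OF _ b(5)] b(6) by blast
      have "add_follows (add_X S X) h a b'"
        using add_follows.step[where h = h, OF b(1-3)] b(4) b'(1) by simp
      with b' show ?thesis by blast
    next
      case False
      then obtain p where p: "a_lab (add_X S X) a = ATerm (X, p)" "0 \<le> p" "p \<le> 1"
        using add_X_terminal[OF assms(1) less.prems] by blast
      with add_follows.at_term[OF p(1), of h] less.prems show ?thesis by blast
    qed
  qed
qed

theorem lemma5:
  fixes S :: "('n,'m) spn_scheme" and N :: nat
  assumes "normal_spn S" and "spn_over S N"
  shows
    "(\<forall>v\<in>s_nodes S. s_kind S v = SumN \<longrightarrow>
        (\<forall>i\<in>{1..length (s_ch S v)}. \<exists>a t. add_follows (add_H S v) (\<lambda>_. i) (a_root (add_H S v)) a
              \<and> a \<in> a_nodes (add_H S v) \<and> a_lab (add_H S v) a = ATerm t \<and> 0 \<le> t) \<and>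
        (\<Sum>i=1..length (s_ch S v). add_value (add_H S v) (\<lambda>_. i)) = 1)
   \<and> (\<forall>X\<in>{1..N}.
        (\<forall>a\<in>a_nodes (add_X S X). \<forall>y. a_lab (add_X S X) a = AVar y \<longrightarrow> y \<in> bn_parents S (Obs X)) \<and>
        (\<forall>h. (\<forall>y\<in>bn_parents S (Obs X). 1 \<le> h y \<and> h y \<le> bn_card S y) \<longrightarrow>
           (\<exists>a p. add_follows (add_X S X) h (a_root (add_X S X)) a \<and> a \<in> a_nodes (add_X S X) \<and>
              a_lab (add_X S X) a = ATerm (X, p) \<and>
              (\<forall>x. 0 \<le> uni_dist p x) \<and> uni_dist p True + uni_dist p False = 1)))"
proof (intro conjI ballI impI allI)
  fix v i
  assume "v \<in> s_nodes S" "s_kind S v = SumN" "i \<in> {1..length (s_ch S v)}"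
  then show "\<exists>a t. add_follows (add_H S v) (\<lambda>_. i) (a_root (add_H S v)) a
      \<and> a \<in> a_nodes (add_H S v) \<and> a_lab (add_H S v) a = ATerm t \<and> 0 \<le> t"
    using add_H_distribution(1)[OF assms(1)] by blast
next
  fix v
  assume "v \<in> s_nodes S" "s_kind S v = SumN"
  then show "(\<Sum>i=1..length (s_ch S v). add_value (add_H S v) (\<lambda>_. i)) = 1"
    by (rule add_H_distribution(2)[OF assms(1)])
next
  fix X a y
  assume "a \<in> a_nodes (add_X S X)" "a_lab (add_X S X) a = AVar y"
  then show "y \<in> bn_parents S (Obs X)" by (rule add_X_var_label_parent)
next
  fix X h
  assume X: "X \<in> {1..N}" and h: "\<forall>y\<in>bn_parents S (Obs X). 1 \<le> h y \<and> h y \<le> bn_card S y"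
  have "a_root (add_X S X) \<in> a_nodes (add_X S X)"
    using add_X_root assms X unfolding normal_spn_def by blast
  then obtain b p where "add_follows (add_X S X) h (a_root (add_X S X)) b"
    "b \<in> a_nodes (add_X S X)" "a_lab (add_X S X) b = ATerm (X, p)" "0 \<le> p" "p \<le> 1"
    using add_X_reaches_terminal[OF assms(1) _ h] by blast
  then show "\<exists>a p. add_follows (add_X S X) h (a_root (add_X S X)) a \<and> a \<in> a_nodes (add_X S X) \<and>
      a_lab (add_X S X) a = ATerm (X, p) \<and> (\<forall>x. 0 \<le> uni_dist p x) \<and> uni_dist p True + uni_dist p False = 1"
    by (auto simp: uni_dist_def)
qed

end
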